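(* Let $\mathbf S=\langle S,\wedge,1\rangle$ be a meet semilattice with top element $1$, and let $\operatorname{Sub}\mathbf S$ denote the lattice of subsemilattices of $\mathbf S$ containing $1$. (a) If $\varepsilon$ is a distributive quasi-order on $\mathbf S$, then $\operatorname{Sub}(\mathbf S,\varepsilon)$, the lattice of all $\varepsilon$-closed subsemilattices containing $1$, is a complete sublattice of $\operatorname{Sub}\mathbf S$. (b) Conversely, let $\mathbf T$ be a complete sublattice of $\operatorname{Sub}\mathbf S$, and define $c\,\rho\,d$ iff for all $X\in\mathbf T$, $c\in X$ implies $d\in X$. Then $\rho$ is a distributive quasi-order, $\mathbf T$ consists precisely of the $\rho$-closed members of $\operatorname{Sub}\mathbf S$, and $\rho$ satisfies (3) if $c\,\rho\,d_1$ and $c\,\rho\,d_2$ then $c\,\rho\,d_1\wedge d_2$; and (4) $c\,\rho\,1$ for all $c\in S$. (c) The correspondence between complete sublattices of $\operatorname{Sub}\mathbf S$ and distributive quasi-orders satisfying (3) and (4) is a dual isomorphism.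
   Context: A quasi-order $\varepsilon$ on $\mathbf S$ is distributive if (1) whenever $c_1\wedge c_2\,\varepsilon\,d$ there exist $d_1,d_2$ with $c_i\,\varepsilon\,d_i$ ($i=1,2$) and $d=d_1\wedge d_2$, and (2) $1\,\varepsilon\,d$ implies $d=1$. A subset $X$ is $\varepsilon$-closed if $c\in X$ and $c\,\varepsilon\,d$ imply $d\in X$. A complete sublattice is a subset closed under arbitrary meets and joins computed in $\operatorname{Sub}\mathbf S$. Quasi-orders are ordered by inclusion. *)

theory Defs
  imports Main
begin

text \<open>The meet semilattice with top S is the whole type 'a (class bounded_semilattice_inf_top);
  meet is inf, the top element 1 is top.\<close>

definition is_sub :: "'a::bounded_semilattice_inf_top set \<Rightarrow> bool" where
  "is_sub X \<longleftrightarrow> top \<in> X \<and> (\<forall>x\<in>X. \<forall>y\<in>X. inf x y \<in> X)"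

definition Sub :: "'a::bounded_semilattice_inf_top set set" where
  "Sub = {X. is_sub X}"

text \<open>Meet in Sub S of a family F is the intersection (UNIV for the empty family);
  join is the subsemilattice (containing top) generated by the union.\<close>
definition sub_meet :: "'a::bounded_semilattice_inf_top set set \<Rightarrow> 'a set" where
  "sub_meet F = \<Inter>F"

definition sub_join :: "'a::bounded_semilattice_inf_top set set \<Rightarrow> 'a set" where
  "sub_join F = \<Inter>{Y. is_sub Y \<and> \<Union>F \<subseteq> Y}"

definition complete_sublattice :: "'a::bounded_semilattice_inf_top set set \<Rightarrow> bool" where
  "complete_sublattice T \<longleftrightarrow> T \<subseteq> Sub \<and>
     (\<forall>F. F \<subseteq> T \<longrightarrow> sub_meet F \<in> T \<and> sub_join F \<in> T)"

definition quasi_order :: "'a rel \<Rightarrow> bool" where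
  "quasi_order e \<longleftrightarrow> refl e \<and> trans e"

definition distributive_qo :: "'a::bounded_semilattice_inf_top rel \<Rightarrow> bool" where
  "distributive_qo e \<longleftrightarrow>
     (\<forall>c1 c2 d. (inf c1 c2, d) \<in> e \<longrightarrow>
        (\<exists>d1 d2. (c1, d1) \<in> e \<and> (c2, d2) \<in> e \<and> d = inf d1 d2)) \<and>
     (\<forall>d. (top, d) \<in> e \<longrightarrow> d = top)"

definition closed_under :: "'a rel \<Rightarrow> 'a set \<Rightarrow> bool" where
  "closed_under e X \<longleftrightarrow> (\<forall>c d. c \<in> X \<and> (c, d) \<in> e \<longrightarrow> d \<in> X)"

definition SubE :: "'a::bounded_semilattice_inf_top rel \<Rightarrow> 'a set set" where
  "SubE e = {X \<in> Sub. closed_under e X}"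

definition rho_of :: "'a set set \<Rightarrow> 'a rel" where
  "rho_of T = {(c, d). \<forall>X\<in>T. c \<in> X \<longrightarrow> d \<in> X}"

definition cond3 :: "'a::bounded_semilattice_inf_top rel \<Rightarrow> bool" where
  "cond3 e \<longleftrightarrow> (\<forall>c d1 d2. (c, d1) \<in> e \<and> (c, d2) \<in> e \<longrightarrow> (c, inf d1 d2) \<in> e)"

definition cond4 :: "'a::bounded_semilattice_inf_top rel \<Rightarrow> bool" where
  "cond4 e \<longleftrightarrow> (\<forall>c. (c, top) \<in> e)"

end

theory Submission
  imports Defs
begin

text \<open>
  For (a), an element of the join of \<open>\<epsilon>\<close>-closed subsemilattices is built from their
  elements and \<open>1\<close> by meets, and distributivity lets \<open>\<epsilon>\<close>-successors follow this construction.
  For (b), \<open>c \<rho> d\<close> says that \<open>d\<close> lies in the least member \<open>[c]\<close> of \<open>T\<close> containing \<open>c\<close>.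
  The join of two subsemilattices \<open>A\<close>, \<open>B\<close> is \<open>{a \<and> b | a \<in> A, b \<in> B}\<close>; applied to
  \<open>[c\<^sub>1] \<or> [c\<^sub>2] \<in> T\<close>, which contains \<open>c\<^sub>1 \<and> c\<^sub>2\<close>, this yields distributivity of \<open>\<rho>\<close>.
  A \<open>\<rho>\<close>-closed subsemilattice \<open>X\<close> is the join of the \<open>[c]\<close>, \<open>c \<in> X\<close>, hence lies in \<open>T\<close>.
  Conversely, for \<open>\<epsilon>\<close> with (3) and (4) the sets \<open>\<epsilon>``{c}\<close> are \<open>\<epsilon>\<close>-closed subsemilattices,
  so \<open>\<epsilon>\<close> is recovered as \<open>\<rho>\<close> of \<open>Sub(S, \<epsilon>)\<close>.
\<close>

inductive_set sub_generated :: "'a::bounded_semilattice_inf_top set set \<Rightarrow> 'a set" for F where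
  top: "top \<in> sub_generated F"
| base: "X \<in> F \<Longrightarrow> x \<in> X \<Longrightarrow> x \<in> sub_generated F"
| inf: "a \<in> sub_generated F \<Longrightarrow> b \<in> sub_generated F \<Longrightarrow> inf a b \<in> sub_generated F"

lemma is_sub_sub_generated: "is_sub (sub_generated F)"
  unfolding is_sub_def by (auto intro: sub_generated.intros)

lemma sub_generated_least:
  assumes "is_sub Y" and "\<Union>F \<subseteq> Y"
  shows "sub_generated F \<subseteq> Y"
proof
  fix x assume "x \<in> sub_generated F"
  then show "x \<in> Y" using assms by induction (auto simp: is_sub_def)
qed

lemma sub_generated_eq:
  assumes "is_sub X" and "\<Union>F = X"
  shows "sub_generated F = X"
  using sub_generated_least[of X F] assms by (auto intro: sub_generated.base)

lemma sub_join_eq_sub_generated: "sub_join F = sub_generated F"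
proof
  show "sub_join F \<subseteq> sub_generated F"
    unfolding sub_join_def using is_sub_sub_generated[of F] by (auto intro: sub_generated.base)
  show "sub_generated F \<subseteq> sub_join F"
    unfolding sub_join_def using sub_generated_least by blast
qed

lemma sub_generated_empty: "sub_generated {} = {top}"
  by (intro antisym sub_generated_least) (auto simp: is_sub_def intro: sub_generated.top)

lemma sub_generated_pair:
  assumes A: "is_sub A" and B: "is_sub B"
  shows "sub_generated {A, B} = {inf a b | a b. a \<in> A \<and> b \<in> B}" (is "_ = ?P")
proof (rule antisym)
  have "is_sub ?P"
    unfolding is_sub_def
  proof (intro conjI ballI)
    show "top \<in> ?P" using A B by (force simp: is_sub_def)
    fix x y assume "x \<in> ?P" "y \<in> ?P"
    then obtain a b a' b' where "x = inf a b" "y = inf a' b'" "a \<in> A" "b \<in> B" "a' \<in> A" "b' \<in> B"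
      by blast
    moreover from this have "inf x y = inf (inf a a') (inf b b')" by (simp add: inf_aci)
    ultimately show "inf x y \<in> ?P" using A B unfolding is_sub_def by blast
  qed
  moreover have "\<Union>{A, B} \<subseteq> ?P"
  proof
    fix x assume "x \<in> \<Union>{A, B}"
    then have "(x \<in> A \<and> top \<in> B) \<or> (top \<in> A \<and> x \<in> B)"
      using A B by (auto simp: is_sub_def)
    then show "x \<in> ?P" by (metis (mono_tags, lifting) inf_top_left inf_top_right mem_Collect_eq)
  qed
  ultimately show "sub_generated {A, B} \<subseteq> ?P" by (rule sub_generated_least)
  show "?P \<subseteq> sub_generated {A, B}" by (auto intro: sub_generated.intros)
qed

lemma closed_under_sub_generated:
  assumes e: "distributive_qo e" and F: "\<And>X. X \<in> F \<Longrightarrow> closed_under e X"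
  shows "closed_under e (sub_generated F)"
  unfolding closed_under_def
proof (intro allI impI, elim conjE)
  fix c d assume "c \<in> sub_generated F" "(c, d) \<in> e"
  then show "d \<in> sub_generated F"
  proof (induction arbitrary: d)
    case top
    then show ?case using e by (auto simp: distributive_qo_def intro: sub_generated.top)
  next
    case (base X x)
    then show ?case using F by (auto simp: closed_under_def intro: sub_generated.base)
  next
    case (inf a b)
    then obtain d1 d2 where "(a, d1) \<in> e" "(b, d2) \<in> e" "d = inf d1 d2"
      using e unfolding distributive_qo_def by blast
    then show ?case using inf.IH by (auto intro: sub_generated.inf)
  qed
qed

lemma complete_sublattice_SubE:
  assumes "distributive_qo e"
  shows "complete_sublattice (SubE e)"
  unfolding complete_sublattice_def
proof (intro conjI allI impI)
  show "SubE e \<subseteq> Sub" by (auto simp: SubE_def)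
  fix F assume F: "F \<subseteq> SubE e"
  then show "sub_meet F \<in> SubE e"
    by (auto simp: sub_meet_def SubE_def Sub_def is_sub_def closed_under_def; blast)
  have "closed_under e (sub_generated F)"
    using closed_under_sub_generated[OF assms] F by (auto simp: SubE_def)
  then show "sub_join F \<in> SubE e"
    using is_sub_sub_generated[of F] by (simp add: sub_join_eq_sub_generated SubE_def Sub_def)
qed

definition least_containing :: "'a set set \<Rightarrow> 'a \<Rightarrow> 'a set" where
  "least_containing T c = \<Inter>{X \<in> T. c \<in> X}"

lemma rho_of_iff_least_containing: "(c, d) \<in> rho_of T \<longleftrightarrow> d \<in> least_containing T c"
  by (auto simp: rho_of_def least_containing_def)

lemma mem_least_containing: "c \<in> least_containing T c"
  by (auto simp: least_containing_def)

lemma complete_sublattice_subset_Sub: "complete_sublattice T \<Longrightarrow> T \<subseteq> Sub"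
  by (simp add: complete_sublattice_def)

lemma complete_sublattice_is_sub: "complete_sublattice T \<Longrightarrow> X \<in> T \<Longrightarrow> is_sub X"
  by (auto simp: complete_sublattice_def Sub_def)

lemma complete_sublattice_sub_generated:
  "complete_sublattice T \<Longrightarrow> F \<subseteq> T \<Longrightarrow> sub_generated F \<in> T"
  by (auto simp: complete_sublattice_def sub_join_eq_sub_generated)

lemma least_containing_in: "complete_sublattice T \<Longrightarrow> least_containing T c \<in> T"
  unfolding complete_sublattice_def sub_meet_def least_containing_def by auto

lemma quasi_order_rho_of: "quasi_order (rho_of T)"
  by (auto simp: quasi_order_def rho_of_def refl_on_def trans_def)

lemma cond3_rho_of: "T \<subseteq> Sub \<Longrightarrow> cond3 (rho_of T)"
  by (auto simp: cond3_def rho_of_def Sub_def is_sub_def)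

lemma cond4_rho_of: "T \<subseteq> Sub \<Longrightarrow> cond4 (rho_of T)"
  by (auto simp: cond4_def rho_of_def Sub_def is_sub_def)

lemma distributive_qo_rho_of:
  assumes T: "complete_sublattice T"
  shows "distributive_qo (rho_of T)"
  unfolding distributive_qo_def
proof (intro conjI allI impI)
  fix c1 c2 d assume "(inf c1 c2, d) \<in> rho_of T"
  let ?A = "least_containing T c1" and ?B = "least_containing T c2"
  have join: "sub_generated {?A, ?B} = {inf a b | a b. a \<in> ?A \<and> b \<in> ?B}"
    by (intro sub_generated_pair complete_sublattice_is_sub[OF T] least_containing_in[OF T])
  have "inf c1 c2 \<in> sub_generated {?A, ?B}"
    unfolding join using mem_least_containing[of c1 T] mem_least_containing[of c2 T] by blast
  moreover have "sub_generated {?A, ?B} \<in> T"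
    by (rule complete_sublattice_sub_generated[OF T]) (simp add: least_containing_in[OF T])
  ultimately have "d \<in> sub_generated {?A, ?B}"
    using \<open>(inf c1 c2, d) \<in> rho_of T\<close> unfolding rho_of_def by blast
  then obtain d1 d2 where "d1 \<in> ?A" "d2 \<in> ?B" "d = inf d1 d2"
    unfolding join by blast
  then show "\<exists>d1 d2. (c1, d1) \<in> rho_of T \<and> (c2, d2) \<in> rho_of T \<and> d = inf d1 d2"
    by (auto simp: rho_of_iff_least_containing)
next
  fix d assume "(top, d) \<in> rho_of T"
  moreover have "sub_generated {} \<in> T" by (rule complete_sublattice_sub_generated[OF T]) simp
  ultimately have "d \<in> sub_generated {}" using sub_generated.top unfolding rho_of_def by blast
  then show "d = top" by (simp add: sub_generated_empty)
qed

lemma SubE_rho_of: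
  assumes T: "complete_sublattice T"
  shows "SubE (rho_of T) = T"
proof
  show "T \<subseteq> SubE (rho_of T)"
    using complete_sublattice_is_sub[OF T] by (auto simp: SubE_def Sub_def closed_under_def rho_of_def)
  show "SubE (rho_of T) \<subseteq> T"
  proof
    fix X assume "X \<in> SubE (rho_of T)"
    then have X: "is_sub X" "closed_under (rho_of T) X" by (auto simp: SubE_def Sub_def)
    have "\<Union>(least_containing T ` X) = X"
      using X(2) mem_least_containing by (fastforce simp: closed_under_def rho_of_iff_least_containing)
    then have "X = sub_generated (least_containing T ` X)"
      using sub_generated_eq[OF X(1)] by simp
    also have "\<dots> \<in> T"
      using complete_sublattice_sub_generated[OF T] least_containing_in[OF T] by blast
    finally show "X \<in> T" .
  qed
qed

lemma is_sub_Image_singleton: "cond3 e \<Longrightarrow> cond4 e \<Longrightarrow> is_sub (e `` {c})"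
  by (simp add: is_sub_def cond3_def cond4_def)

lemma closed_under_Image_singleton: "trans e \<Longrightarrow> closed_under e (e `` {c})"
  unfolding closed_under_def by (blast dest: transD)

lemma rho_of_SubE:
  assumes "quasi_order e" "cond3 e" "cond4 e"
  shows "rho_of (SubE e) = e"
proof
  show "e \<subseteq> rho_of (SubE e)" by (auto simp: rho_of_def SubE_def closed_under_def)
  show "rho_of (SubE e) \<subseteq> e"
  proof clarify
    fix c d assume cd: "(c, d) \<in> rho_of (SubE e)"
    have "e `` {c} \<in> SubE e"
      using assms
      by (simp add: SubE_def Sub_def quasi_order_def is_sub_Image_singleton
          closed_under_Image_singleton)
    moreover have "c \<in> e `` {c}" using assms by (auto simp: quasi_order_def refl_on_def)
    ultimately show "(c, d) \<in> e" using cd by (auto simp: rho_of_def)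
  qed
qed

lemma rho_of_antimono: "T1 \<subseteq> T2 \<Longrightarrow> rho_of T2 \<subseteq> rho_of T1"
  by (auto simp: rho_of_def)

lemma SubE_antimono: "e1 \<subseteq> e2 \<Longrightarrow> SubE e2 \<subseteq> SubE e1"
  by (auto simp: SubE_def closed_under_def)

lemma complete_sublattice_subset_iff_rho_of:
  assumes "complete_sublattice T1" "complete_sublattice T2"
  shows "T1 \<subseteq> T2 \<longleftrightarrow> rho_of T2 \<subseteq> rho_of T1"
proof
  assume "rho_of T2 \<subseteq> rho_of T1"
  then have "SubE (rho_of T1) \<subseteq> SubE (rho_of T2)" by (rule SubE_antimono)
  then show "T1 \<subseteq> T2" by (simp add: SubE_rho_of assms)
qed (rule rho_of_antimono)

lemma bij_betw_rho_of:
  "bij_betw rho_of {T :: 'a::bounded_semilattice_inf_top set set. complete_sublattice T}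
     {e. quasi_order e \<and> distributive_qo e \<and> cond3 e \<and> cond4 e}"
proof (rule bij_betw_byWitness[where f' = SubE])
  show "\<forall>T\<in>{T. complete_sublattice T}. SubE (rho_of T) = T" by (simp add: SubE_rho_of)
  show "\<forall>e\<in>{e. quasi_order e \<and> distributive_qo e \<and> cond3 e \<and> cond4 e}. rho_of (SubE e) = e"
    by (simp add: rho_of_SubE)
  show "rho_of ` {T. complete_sublattice T}
      \<subseteq> {e. quasi_order e \<and> distributive_qo e \<and> cond3 e \<and> cond4 e}"
    by (auto simp: quasi_order_rho_of distributive_qo_rho_of cond3_rho_of cond4_rho_of
        complete_sublattice_subset_Sub)
  show "SubE ` {e. quasi_order e \<and> distributive_qo e \<and> cond3 e \<and> cond4 e}
      \<subseteq> {T. complete_sublattice T}"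
    using complete_sublattice_SubE by blast
qed

theorem theorem8p1:
  shows
   "(\<forall>e :: ('a::bounded_semilattice_inf_top) rel. quasi_order e \<and> distributive_qo e \<longrightarrow> complete_sublattice (SubE e))
    \<and> (\<forall>T :: 'a set set. complete_sublattice T \<longrightarrow>
         quasi_order (rho_of T) \<and> distributive_qo (rho_of T) \<and>
         T = SubE (rho_of T) \<and> cond3 (rho_of T) \<and> cond4 (rho_of T))
    \<and> (bij_betw (rho_of :: 'a set set \<Rightarrow> 'a rel)
          {T. complete_sublattice T}
          {e. quasi_order e \<and> distributive_qo e \<and> cond3 e \<and> cond4 e}
       \<and> (\<forall>e :: 'a rel. quasi_order e \<and> distributive_qo e \<and> cond3 e \<and> cond4 e \<longrightarrow>
            complete_sublattice (SubE e) \<and> rho_of (SubE e) = e)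
       \<and> (\<forall>T1 T2 :: 'a set set. complete_sublattice T1 \<longrightarrow> complete_sublattice T2 \<longrightarrow>
            (T1 \<subseteq> T2 \<longleftrightarrow> rho_of T2 \<subseteq> rho_of T1)))"
  by (simp add: complete_sublattice_SubE bij_betw_rho_of rho_of_SubE
      complete_sublattice_subset_iff_rho_of quasi_order_rho_of distributive_qo_rho_of SubE_rho_of
      cond3_rho_of cond4_rho_of complete_sublattice_subset_Sub)

end
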